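(* Let $(X,d)$ and $(Y,\rho)$ be compact metric spaces, let $F=\{f_1,\dots,f_k\}$ be a multiple mapping on $X$ and $G=\{g_1,\dots,g_m\}$ a multiple mapping on $Y$, and let $T:X\to Y$ be a topological conjugacy from $(X,F)$ to $(Y,G)$. Then $F$ is Hausdorff metric Kato chaotic (with respect to $d_H$) if and only if $G$ is Hausdorff metric Kato chaotic (with respect to $\rho_H$).
   Context: A multiple mapping $F=\{f_1,\dots,f_k\}$ on $X$ is a finite tuple of continuous self-maps of $X$; for $x\in X$ and $n\ge1$, $F(x)=\{f_1(x),\dots,f_k(x)\}$ and $F^n(x)=\{f_{i_1}f_{i_2}\cdots f_{i_n}(x)\mid i_1,\dots,i_n\in\{1,\dots,k\}\}$; for $A\subset X$, $F(A)=\bigcup_{a\in A}F(a)$. $d_H$ (resp. $\rho_H$) denotes the Hausdorff metric $d_H(A,B)=\max\{\sup_{a\in A}\inf_{b\in B}d(a,b),\sup_{b\in B}\inf_{a\in A}d(a,b)\}$ on nonempty compact subsets. $F$ is Hausdorff metric sensitive if there is $\delta>0$ such that for every nonempty open $U\subset X$ there exist $x,y\in U$, $n\in\mathbb{Z}^+$ with $d_H(F^n(x),F^n(y))>\delta$; Hausdorff metric accessible if for every $\epsilon>0$ and all nonempty open $U,V\subset X$ there exist $x\in U,y\in V,n\in\mathbb{Z}^+$ with $d_H(F^n(x),F^n(y))<\epsilon$; Hausdorff metric Kato chaotic if it is both. Here $\mathbb{Z}^+=\{1,2,\dots\}$. A topological conjugacy from $(X,F)$ to $(Y,G)$ is a homeomorphism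 $T:X\to Y$ such that $T(F(x))=G(T(x))$ for all $x\in X$. *)

theory Defs
  imports "HOL-Analysis.Analysis"
begin

definition multiple_mapping :: "'a::topological_space set \<Rightarrow> ('a \<Rightarrow> 'a) list \<Rightarrow> bool" where
  "multiple_mapping X fs \<longleftrightarrow> fs \<noteq> [] \<and> (\<forall>f \<in> set fs. continuous_on X f \<and> f ` X \<subseteq> X)"

definition mm_img :: "('a \<Rightarrow> 'a) list \<Rightarrow> 'a \<Rightarrow> 'a set" where
  "mm_img fs x = (\<lambda>f. f x) ` set fs"

fun mm_pow :: "('a \<Rightarrow> 'a) list \<Rightarrow> nat \<Rightarrow> 'a \<Rightarrow> 'a set" where
  "mm_pow fs 0 x = {x}"
| "mm_pow fs (Suc n) x = (\<Union>y \<in> mm_pow fs n x. mm_img fs y)"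

definition hausdorff_dist :: "'a::metric_space set \<Rightarrow> 'a set \<Rightarrow> real" where
  "hausdorff_dist A B = max (SUP a\<in>A. infdist a B) (SUP b\<in>B. infdist b A)"

definition hm_sensitive :: "'a::metric_space set \<Rightarrow> ('a \<Rightarrow> 'a) list \<Rightarrow> bool" where
  "hm_sensitive X fs \<longleftrightarrow> (\<exists>\<delta>>0. \<forall>U. openin (top_of_set X) U \<and> U \<noteq> {} \<longrightarrow>
     (\<exists>x\<in>U. \<exists>y\<in>U. \<exists>n::nat. n \<ge> 1 \<and> hausdorff_dist (mm_pow fs n x) (mm_pow fs n y) > \<delta>))"

definition hm_accessible :: "'a::metric_space set \<Rightarrow> ('a \<Rightarrow> 'a) list \<Rightarrow> bool" where
  "hm_accessible X fs \<longleftrightarrow> (\<forall>\<epsilon>>0. \<forall>U V. openin (top_of_set X) U \<and> U \<noteq> {} \<and>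
     openin (top_of_set X) V \<and> V \<noteq> {} \<longrightarrow>
     (\<exists>x\<in>U. \<exists>y\<in>V. \<exists>n::nat. n \<ge> 1 \<and> hausdorff_dist (mm_pow fs n x) (mm_pow fs n y) < \<epsilon>))"

definition hm_kato_chaotic :: "'a::metric_space set \<Rightarrow> ('a \<Rightarrow> 'a) list \<Rightarrow> bool" where
  "hm_kato_chaotic X fs \<longleftrightarrow> hm_sensitive X fs \<and> hm_accessible X fs"

definition topological_conjugacy ::
  "'a::topological_space set \<Rightarrow> ('a \<Rightarrow> 'a) list \<Rightarrow> 'b::topological_space set \<Rightarrow> ('b \<Rightarrow> 'b) list \<Rightarrow> ('a \<Rightarrow> 'b) \<Rightarrow> bool" where
  "topological_conjugacy X fs Y gs T \<longleftrightarrow>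
     (\<exists>T'. homeomorphism X Y T T') \<and> (\<forall>x\<in>X. T ` (mm_img fs x) = mm_img gs (T x))"

end

theory Submission
  imports Defs
begin

(* A conjugacy T between compact spaces is uniformly continuous in both directions and maps
   F^n(x) onto G^n(T x). Since all the sets F^n(x) are finite, uniform continuity of T carries
   d_H-closeness of F^n(x), F^n(y) to rho_H-closeness of their images, so accessibility passes
   from F to G; uniform continuity of the inverse does the same for separation, so sensitivity
   passes too, with a smaller constant. The converse follows because conjugacy is symmetric. *)

lemma infdist_less_iff_finite:
  assumes "finite B" "B \<noteq> {}"
  shows "infdist a B < e \<longleftrightarrow> (\<exists>b\<in>B. dist a b < e)"
  using assms by (simp add: infdist_def cInf_less_iff)

lemma hausdorff_dist_less_iff_finite:
  assumes "finite A" "A \<noteq> {}" "finite B" "B \<noteq> {}"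
  shows "hausdorff_dist A B < e \<longleftrightarrow>
    (\<forall>a\<in>A. \<exists>b\<in>B. dist a b < e) \<and> (\<forall>b\<in>B. \<exists>a\<in>A. dist b a < e)"
  using assms by (simp add: hausdorff_dist_def finite_Sup_less_iff infdist_less_iff_finite)

lemma uniformly_continuous_on_hausdorff_dist:
  assumes "uniformly_continuous_on S T" "e > 0"
  obtains d where "d > 0"
    "\<And>A B. \<lbrakk>finite A; A \<noteq> {}; A \<subseteq> S; finite B; B \<noteq> {}; B \<subseteq> S; hausdorff_dist A B < d\<rbrakk>
       \<Longrightarrow> hausdorff_dist (T ` A) (T ` B) < e"
proof -
  obtain d where "d > 0" and d: "\<And>x x'. \<lbrakk>x \<in> S; x' \<in> S; dist x' x < d\<rbrakk> \<Longrightarrow> dist (T x') (T x) < e"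
    using assms unfolding uniformly_continuous_on_def by metis
  moreover have "hausdorff_dist (T ` A) (T ` B) < e"
    if "finite A" "A \<noteq> {}" "A \<subseteq> S" "finite B" "B \<noteq> {}" "B \<subseteq> S" "hausdorff_dist A B < d" for A B
  proof -
    have close: "(\<forall>a\<in>A. \<exists>b\<in>B. dist a b < d) \<and> (\<forall>b\<in>B. \<exists>a\<in>A. dist b a < d)"
      using that by (simp add: hausdorff_dist_less_iff_finite)
    have "(\<forall>a\<in>A. \<exists>b\<in>B. dist (T a) (T b) < e) \<and> (\<forall>b\<in>B. \<exists>a\<in>A. dist (T b) (T a) < e)"
    proof (intro conjI ballI)
      fix a assume "a \<in> A"
      with close obtain b where "b \<in> B" "dist a b < d" by blast
      then show "\<exists>b\<in>B. dist (T a) (T b) < e"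
        using d \<open>a \<in> A\<close> that(3,6) by blast
    next
      fix b assume "b \<in> B"
      with close obtain a where "a \<in> A" "dist b a < d" by blast
      then show "\<exists>a\<in>A. dist (T b) (T a) < e"
        using d \<open>b \<in> B\<close> that(3,6) by blast
    qed
    then show ?thesis
      using that by (simp add: hausdorff_dist_less_iff_finite)
  qed
  ultimately show ?thesis
    using that by blast
qed

lemma finite_mm_pow: "finite (mm_pow fs n x)"
  by (induction n) (simp_all add: mm_img_def)

lemma mm_pow_nonempty: "fs \<noteq> [] \<Longrightarrow> mm_pow fs n x \<noteq> {}"
  by (induction n) (auto simp: mm_img_def)

lemma mm_pow_subset:
  assumes "\<forall>f\<in>set fs. f ` X \<subseteq> X" "x \<in> X"
  shows "mm_pow fs n x \<subseteq> X"
  using assms by (induction n) (auto simp: mm_img_def)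

lemma image_mm_pow:
  assumes "\<forall>f\<in>set fs. f ` X \<subseteq> X" "\<forall>x\<in>X. T ` mm_img fs x = mm_img gs (T x)" "x \<in> X"
  shows "T ` mm_pow fs n x = mm_pow gs n (T x)"
proof (induction n)
  case (Suc n)
  have "T ` mm_pow fs (Suc n) x = (\<Union>y\<in>mm_pow fs n x. T ` mm_img fs y)"
    by (simp add: image_UN)
  also have "\<dots> = (\<Union>y\<in>mm_pow fs n x. mm_img gs (T y))"
    using mm_pow_subset[OF assms(1,3), of n] assms(2) by (intro SUP_cong refl) blast
  also have "\<dots> = (\<Union>z\<in>T ` mm_pow fs n x. mm_img gs z)"
    by simp
  finally show ?case
    using Suc by simp
qed simp

lemma openin_vimage_surj_nonempty:
  assumes "continuous_on X T" "T ` X = Y" "openin (top_of_set Y) U" "U \<noteq> {}"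
  shows "openin (top_of_set X) (X \<inter> T -` U)" "X \<inter> T -` U \<noteq> {}"
proof -
  have "T \<in> X \<rightarrow> Y"
    using assms(2) by blast
  with assms(1,3) show "openin (top_of_set X) (X \<inter> T -` U)"
    by (intro continuous_openin_preimage)
  obtain u where "u \<in> U"
    using assms(4) by blast
  then obtain x where "x \<in> X" "T x = u"
    using assms(2) openin_subset[OF assms(3)] by auto
  with \<open>u \<in> U\<close> show "X \<inter> T -` U \<noteq> {}"
    by blast
qed

lemma homeomorphism_image_inverse:
  assumes "homeomorphism X Y T T'" "A \<subseteq> X"
  shows "T' ` T ` A = A"
proof -
  have "T' (T x) = x" if "x \<in> A" for x
    using assms homeomorphism_apply1 that by blast
  then show ?thesis
    by (simp add: image_image cong: image_cong)
qed

lemma topological_conjugacy_sym: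
  assumes "\<forall>f\<in>set fs. f ` X \<subseteq> X" "topological_conjugacy X fs Y gs T"
  obtains T' where "topological_conjugacy Y gs X fs T'"
proof -
  obtain T' where hom: "homeomorphism X Y T T'" and conj: "\<forall>x\<in>X. T ` mm_img fs x = mm_img gs (T x)"
    using assms(2) unfolding topological_conjugacy_def by blast
  have "T' ` mm_img gs y = mm_img fs (T' y)" if "y \<in> Y" for y
  proof -
    have "T' y \<in> X"
      using homeomorphism_image2[OF hom] that by blast
    have "mm_img gs y = T ` mm_img fs (T' y)"
      using conj \<open>T' y \<in> X\<close> homeomorphism_apply2[OF hom that] by metis
    moreover have "mm_img fs (T' y) \<subseteq> X"
      using assms(1) \<open>T' y \<in> X\<close> by (auto simp: mm_img_def)
    ultimately show ?thesis
      using homeomorphism_image_inverse[OF hom] by simp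
  qed
  then have "topological_conjugacy Y gs X fs T'"
    unfolding topological_conjugacy_def using homeomorphism_symD[OF hom] by blast
  then show thesis
    by (rule that)
qed

lemma hm_accessible_factor:
  assumes "\<forall>f\<in>set fs. f ` X \<subseteq> X" "fs \<noteq> []" "uniformly_continuous_on X T" "T ` X = Y"
    and conj: "\<forall>x\<in>X. T ` mm_img fs x = mm_img gs (T x)"
    and acc: "hm_accessible X fs"
  shows "hm_accessible Y gs"
  unfolding hm_accessible_def
proof (intro allI impI)
  fix \<epsilon> :: real and U V
  assume "\<epsilon> > 0" and UV: "openin (top_of_set Y) U \<and> U \<noteq> {} \<and> openin (top_of_set Y) V \<and> V \<noteq> {}"
  obtain \<eta> where "\<eta> > 0" and \<eta>: "\<And>A B. \<lbrakk>finite A; A \<noteq> {}; A \<subseteq> X; finite B; B \<noteq> {}; B \<subseteq> X;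
      hausdorff_dist A B < \<eta>\<rbrakk> \<Longrightarrow> hausdorff_dist (T ` A) (T ` B) < \<epsilon>"
    using uniformly_continuous_on_hausdorff_dist[OF assms(3) \<open>\<epsilon> > 0\<close>] by blast
  have "continuous_on X T"
    using assms(3) by (rule uniformly_continuous_imp_continuous)
  then have "openin (top_of_set X) (X \<inter> T -` U)" "X \<inter> T -` U \<noteq> {}"
    "openin (top_of_set X) (X \<inter> T -` V)" "X \<inter> T -` V \<noteq> {}"
    using openin_vimage_surj_nonempty[OF _ assms(4)] UV by blast+
  then obtain x y n where x: "x \<in> X \<inter> T -` U" and y: "y \<in> X \<inter> T -` V" and "n \<ge> 1"
    and "hausdorff_dist (mm_pow fs n x) (mm_pow fs n y) < \<eta>"
    using acc[unfolded hm_accessible_def, rule_format, of \<eta> "X \<inter> T -` U" "X \<inter> T -` V"] \<open>\<eta> > 0\<close>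
    by blast
  then have "hausdorff_dist (T ` mm_pow fs n x) (T ` mm_pow fs n y) < \<epsilon>"
    using assms(1,2) by (intro \<eta>) (simp_all add: finite_mm_pow mm_pow_nonempty mm_pow_subset)
  then have "hausdorff_dist (mm_pow gs n (T x)) (mm_pow gs n (T y)) < \<epsilon>"
    using x y by (simp add: image_mm_pow[OF assms(1) conj])
  then show "\<exists>x\<in>U. \<exists>y\<in>V. \<exists>n. n \<ge> 1 \<and> hausdorff_dist (mm_pow gs n x) (mm_pow gs n y) < \<epsilon>"
    using x y \<open>n \<ge> 1\<close> by blast
qed

lemma hm_sensitive_conjugate:
  assumes "\<forall>f\<in>set fs. f ` X \<subseteq> X" "fs \<noteq> []" "homeomorphism X Y T T'" "uniformly_continuous_on Y T'"
    and conj: "\<forall>x\<in>X. T ` mm_img fs x = mm_img gs (T x)"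
    and sens: "hm_sensitive X fs"
  shows "hm_sensitive Y gs"
proof -
  obtain \<delta> where "\<delta> > 0" and "\<forall>U. openin (top_of_set X) U \<and> U \<noteq> {} \<longrightarrow>
      (\<exists>x\<in>U. \<exists>y\<in>U. \<exists>n. n \<ge> 1 \<and> hausdorff_dist (mm_pow fs n x) (mm_pow fs n y) > \<delta>)"
    using sens unfolding hm_sensitive_def by (elim exE conjE) (rule that)
  then have \<delta>: "\<exists>x\<in>U. \<exists>y\<in>U. \<exists>n. n \<ge> 1 \<and> hausdorff_dist (mm_pow fs n x) (mm_pow fs n y) > \<delta>"
    if "openin (top_of_set X) U" "U \<noteq> {}" for U
    using that by simp
  obtain \<eta> where "\<eta> > 0" and \<eta>: "\<And>A B. \<lbrakk>finite A; A \<noteq> {}; A \<subseteq> Y; finite B; B \<noteq> {}; B \<subseteq> Y;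
      hausdorff_dist A B < \<eta>\<rbrakk> \<Longrightarrow> hausdorff_dist (T' ` A) (T' ` B) < \<delta>"
    using uniformly_continuous_on_hausdorff_dist[OF assms(4) \<open>\<delta> > 0\<close>] by blast
  have separated: "hausdorff_dist (T ` mm_pow fs n x) (T ` mm_pow fs n y) \<ge> \<eta>"
    if "x \<in> X" "y \<in> X" "hausdorff_dist (mm_pow fs n x) (mm_pow fs n y) > \<delta>" for x y n
  proof (rule ccontr)
    have "T ` mm_pow fs n z \<subseteq> Y" if "z \<in> X" for z
      using image_mono[OF mm_pow_subset[OF assms(1) that]] homeomorphism_image1[OF assms(3)]
      by metis
    then have "T ` mm_pow fs n x \<subseteq> Y" "T ` mm_pow fs n y \<subseteq> Y"
      using that(1,2) by blast+
    moreover assume "\<not> ?thesis"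
    ultimately have "hausdorff_dist (T' ` T ` mm_pow fs n x) (T' ` T ` mm_pow fs n y) < \<delta>"
      using assms(2) by (intro \<eta>) (simp_all add: finite_mm_pow mm_pow_nonempty)
    then show False
      using that homeomorphism_image_inverse[OF assms(3) mm_pow_subset[OF assms(1)]] by simp
  qed
  show ?thesis
    unfolding hm_sensitive_def
  proof (intro exI[of _ "\<eta> / 2"] conjI allI impI)
    fix U assume "openin (top_of_set Y) U \<and> U \<noteq> {}"
    then have "openin (top_of_set X) (X \<inter> T -` U)" "X \<inter> T -` U \<noteq> {}"
      using openin_vimage_surj_nonempty[OF homeomorphism_cont1[OF assms(3)]
          homeomorphism_image1[OF assms(3)]] by blast+
    then obtain x y n where x: "x \<in> X \<inter> T -` U" and y: "y \<in> X \<inter> T -` U" and "n \<ge> 1"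
      and "hausdorff_dist (mm_pow fs n x) (mm_pow fs n y) > \<delta>"
      using \<delta> by blast
    then have "hausdorff_dist (mm_pow gs n (T x)) (mm_pow gs n (T y)) > \<eta> / 2"
      using separated[of x y n] \<open>\<eta> > 0\<close> by (simp add: image_mm_pow[OF assms(1) conj])
    then show "\<exists>x\<in>U. \<exists>y\<in>U. \<exists>n. n \<ge> 1 \<and> hausdorff_dist (mm_pow gs n x) (mm_pow gs n y) > \<eta> / 2"
      using x y \<open>n \<ge> 1\<close> by blast
  qed (use \<open>\<eta> > 0\<close> in simp)
qed

lemma hm_kato_chaotic_conjugate:
  assumes "compact X" "compact Y" "multiple_mapping X fs" "topological_conjugacy X fs Y gs T"
    and "hm_kato_chaotic X fs"
  shows "hm_kato_chaotic Y gs"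
proof -
  obtain T' where hom: "homeomorphism X Y T T'" and conj: "\<forall>x\<in>X. T ` mm_img fs x = mm_img gs (T x)"
    using assms(4) unfolding topological_conjugacy_def by blast
  have "uniformly_continuous_on X T" "uniformly_continuous_on Y T'"
    using assms(1,2) hom by (auto intro: compact_uniformly_continuous simp: homeomorphism_def)
  moreover have "fs \<noteq> []" "\<forall>f\<in>set fs. f ` X \<subseteq> X"
    using assms(3) by (auto simp: multiple_mapping_def)
  moreover have "hm_sensitive X fs" "hm_accessible X fs"
    using assms(5) by (simp_all add: hm_kato_chaotic_def)
  ultimately have "hm_sensitive Y gs" "hm_accessible Y gs"
    using hom conj homeomorphism_image1[OF hom]
    by (auto intro: hm_sensitive_conjugate hm_accessible_factor)
  then show ?thesis
    by (simp add: hm_kato_chaotic_def)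
qed

theorem corollary4p4:
  fixes X :: "'a::metric_space set" and Y :: "'b::metric_space set"
    and fs :: "('a \<Rightarrow> 'a) list" and gs :: "('b \<Rightarrow> 'b) list" and T :: "'a \<Rightarrow> 'b"
  assumes "compact X" and "compact Y"
    and "multiple_mapping X fs" and "multiple_mapping Y gs"
    and "topological_conjugacy X fs Y gs T"
  shows "hm_kato_chaotic X fs \<longleftrightarrow> hm_kato_chaotic Y gs"
proof -
  have "\<forall>f\<in>set fs. f ` X \<subseteq> X"
    using assms(3) by (simp add: multiple_mapping_def)
  then obtain T' where "topological_conjugacy Y gs X fs T'"
    using assms(5) by (rule topological_conjugacy_sym)
  then show ?thesis
    using hm_kato_chaotic_conjugate[OF assms(1,2,3,5)] hm_kato_chaotic_conjugate[OF assms(2,1,4)]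
    by blast
qed

end
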